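(* Suppose $R=DV$ is obtained by the lazy reduction, and let $\omega*\sigma,\omega*\tau$ ($\sigma,\tau\in K$) be a persistence pair, $\operatorname{low}R[\omega*\tau]=\omega*\sigma$. Then every simplex with nonzero coefficient in $V[\omega*\tau]$ is a cone simplex or $\omega$ (no base simplex of $K$ occurs in $V[\omega*\tau]$). Consequently the chain $z=(\partial(V[\omega*\tau]\cap(\omega*K\setminus K)))\cap K$ equals $R[\omega*\tau]\cap K$, the restriction of $R[\omega*\tau]$ to base simplices.
   Context: Coefficients are in a field $\mathbb F$. Let $K$ be a finite $\Delta$-complex in which every simplex $\sigma$ carries an integer interval $T(\sigma)=[\min\sigma,\max\sigma]$ with $\min\sigma<\max\sigma$, such that whenever $\sigma$ is a proper face of $\tau$, $\min\sigma<\min\tau<\max\tau<\max\sigma$; assume the values $\min\sigma$ ($\sigma\in K$) are pairwise distinct and the values $\max\sigma$ are pairwise distinct. The cone $\omega*K$ consists of the simplices of $K$ ("base simplices"), a new vertex $\omega$, and simplices $\omega*\sigma$ for $\sigma\in K$ ("cone simplices"), with $\partial(\omega*\sigma)=\sigma-\omega*\partial\sigma$ (for a vertex $v$, $\partial(\omega*v)=v-\omega$). The cone filtration orders base simplices by increasing $\min$, then $\omega$, then the simplices $\omega*\sigma$ by decreasing $\max\sigma$. $D$ is the boundary matrix of $\omega*K$ with rows and columns in this order. For a nonzero column $c$, $\operatorname{low}c$ is its lowest nonzero entry's index. The lazy reduction is the standard column algorithm: start with $R=D$, $V=I$; process columns left to right, and while the current column $R[j]$ is nonzero and some earlier column $R[i]$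 has $\operatorname{low}R[i]=\operatorname{low}R[j]$, replace $R[j]\leftarrow R[j]-cR[i]$, $V[j]\leftarrow V[j]-cV[i]$ with $c$ cancelling the pivot. It yields $R=DV$ with $V$ invertible upper-triangular and $R$ reduced. For a chain $c$ and set of simplices $L$, $c\cap L$ is the restriction of $c$ to simplices in $L$. *)

theory Defs
  imports Main
begin

definition delta_complex :: "'s set \<Rightarrow> ('s \<Rightarrow> nat) \<Rightarrow> ('s \<Rightarrow> nat \<Rightarrow> 's) \<Rightarrow> bool" where
  "delta_complex K dim face \<longleftrightarrow>
     finite K \<and>
     (\<forall>s\<in>K. 0 < dim s \<longrightarrow> (\<forall>i\<le>dim s. face s i \<in> K \<and> dim (face s i) = dim s - 1)) \<and>
     (\<forall>s\<in>K. \<forall>i j. 1 < dim s \<and> i < j \<and> j \<le> dim s \<longrightarrow>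
                 face (face s j) i = face (face s i) (j - 1))"

definition is_facet :: "'s set \<Rightarrow> ('s \<Rightarrow> nat) \<Rightarrow> ('s \<Rightarrow> nat \<Rightarrow> 's) \<Rightarrow> 's \<Rightarrow> 's \<Rightarrow> bool" where
  "is_facet K dim face r s \<longleftrightarrow> s \<in> K \<and> 0 < dim s \<and> (\<exists>i\<le>dim s. r = face s i)"

definition proper_face :: "'s set \<Rightarrow> ('s \<Rightarrow> nat) \<Rightarrow> ('s \<Rightarrow> nat \<Rightarrow> 's) \<Rightarrow> 's \<Rightarrow> 's \<Rightarrow> bool" where
  "proper_face K dim face = tranclp (is_facet K dim face)"

datatype 's csimp = Base 's | Omega | Cone 's

definition cone_set :: "'s set \<Rightarrow> 's csimp set" where
  "cone_set K = Base ` K \<union> {Omega} \<union> Cone ` K"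

fun filt_less :: "('s \<Rightarrow> int) \<Rightarrow> ('s \<Rightarrow> int) \<Rightarrow> 's csimp \<Rightarrow> 's csimp \<Rightarrow> bool" where
  "filt_less mn mx (Base a) (Base b) = (mn a < mn b)"
| "filt_less mn mx (Base a) Omega = True"
| "filt_less mn mx (Base a) (Cone b) = True"
| "filt_less mn mx Omega (Cone b) = True"
| "filt_less mn mx (Cone a) (Cone b) = (mx b < mx a)"
| "filt_less mn mx _ _ = False"

definition cone_filtration :: "'s set \<Rightarrow> ('s \<Rightarrow> int) \<Rightarrow> ('s \<Rightarrow> int) \<Rightarrow> 's csimp list" where
  "cone_filtration K mn mx =
     (THE xs. set xs = cone_set K \<and> distinct xs \<and> sorted_wrt (filt_less mn mx) xs)"

definition ind :: "'a \<Rightarrow> 'a \<Rightarrow> 'f::field" where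
  "ind s t = (if t = s then 1 else 0)"

fun bdry :: "('s \<Rightarrow> nat) \<Rightarrow> ('s \<Rightarrow> nat \<Rightarrow> 's) \<Rightarrow> 's csimp \<Rightarrow> 's csimp \<Rightarrow> 'f::field" where
  "bdry dim face (Base s) =
     (if dim s = 0 then (\<lambda>_. 0)
      else (\<lambda>t. \<Sum>i\<in>{0..dim s}. (-1) ^ i * ind (Base (face s i)) t))"
| "bdry dim face Omega = (\<lambda>_. 0)"
| "bdry dim face (Cone s) =
     (if dim s = 0 then (\<lambda>t. ind (Base s) t - ind Omega t)
      else (\<lambda>t. ind (Base s) t - (\<Sum>i\<in>{0..dim s}. (-1) ^ i * ind (Cone (face s i)) t)))"

definition bd :: "'s set \<Rightarrow> ('s \<Rightarrow> nat) \<Rightarrow> ('s \<Rightarrow> nat \<Rightarrow> 's) \<Rightarrow> ('s csimp \<Rightarrow> 'f::field) \<Rightarrow> 's csimp \<Rightarrow> 'f" where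
  "bd K dim face c = (\<lambda>t. \<Sum>s\<in>cone_set K. c s * bdry dim face s t)"

definition restrict_chain :: "('a \<Rightarrow> 'f::field) \<Rightarrow> 'a set \<Rightarrow> 'a \<Rightarrow> 'f" where
  "restrict_chain c L = (\<lambda>s. if s \<in> L then c s else 0)"

text \<open>A matrix is a function j \<mapsto> column j, a column is a function i \<mapsto> entry in row i.\<close>

definition boundary_matrix :: "('s \<Rightarrow> nat) \<Rightarrow> ('s \<Rightarrow> nat \<Rightarrow> 's) \<Rightarrow> 's csimp list \<Rightarrow> nat \<Rightarrow> nat \<Rightarrow> 'f::field" where
  "boundary_matrix dim face F = (\<lambda>j i. if i < length F \<and> j < length F then bdry dim face (F ! j) (F ! i) else 0)"

definition id_cols :: "nat \<Rightarrow> nat \<Rightarrow> nat \<Rightarrow> 'f::field" where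
  "id_cols N = (\<lambda>j i. if i = j \<and> j < N then 1 else 0)"

definition low :: "(nat \<Rightarrow> 'f::field) \<Rightarrow> nat" where
  "low c = Max {i. c i \<noteq> 0}"

text \<open>States of the lazy column algorithm: (j, R, V), columns < j already processed.\<close>
inductive lazy_run :: "(nat \<Rightarrow> nat \<Rightarrow> 'f::field) \<Rightarrow> nat \<Rightarrow> nat \<Rightarrow> (nat \<Rightarrow> nat \<Rightarrow> 'f) \<Rightarrow> (nat \<Rightarrow> nat \<Rightarrow> 'f) \<Rightarrow> bool"
  for D :: "nat \<Rightarrow> nat \<Rightarrow> 'f::field" and N :: nat where
  init: "lazy_run D N 0 D (id_cols N)"
| reduce: "\<lbrakk> lazy_run D N j R V; j < N; R j \<noteq> (\<lambda>_. 0); i < j; R i \<noteq> (\<lambda>_. 0);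
             low (R i) = low (R j); c = R j (low (R j)) / R i (low (R i)) \<rbrakk>
           \<Longrightarrow> lazy_run D N j (R(j := (\<lambda>r. R j r - c * R i r))) (V(j := (\<lambda>r. V j r - c * V i r)))"
| advance: "\<lbrakk> lazy_run D N j R V; j < N;
              R j = (\<lambda>_. 0) \<or> \<not> (\<exists>i<j. R i \<noteq> (\<lambda>_. 0) \<and> low (R i) = low (R j)) \<rbrakk>
           \<Longrightarrow> lazy_run D N (Suc j) R V"

definition lazy_reduction :: "(nat \<Rightarrow> nat \<Rightarrow> 'f::field) \<Rightarrow> nat \<Rightarrow> (nat \<Rightarrow> nat \<Rightarrow> 'f) \<Rightarrow> (nat \<Rightarrow> nat \<Rightarrow> 'f) \<Rightarrow> bool" where
  "lazy_reduction D N R V \<longleftrightarrow> lazy_run D N N R V"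

definition col_chain :: "'s csimp list \<Rightarrow> (nat \<Rightarrow> 'f::field) \<Rightarrow> 's csimp \<Rightarrow> 'f" where
  "col_chain F c = (\<lambda>s. \<Sum>k<length F. if F ! k = s then c k else 0)"

end

theory Submission
  imports Defs "HOL-Library.Product_Lexorder"
begin

(* A reduction step adds to column j a multiple of an earlier column with the same low, and
   strictly lowers the low of column j.  The cone simplices form a final segment of the
   filtration, so a column whose final low is a cone row had cone-row lows all along; hence
   every column added to it also had a cone-row low, and by induction on the run its V column
   involves no base simplex.  Columns of base simplices are excluded at the start because the
   boundary of a base simplex has no cone entries.  The identity for z is then R = D V together
   with the fact that restricting V[a] to non-base simplices changes nothing. *)

fun cone_key :: "('s \<Rightarrow> int) \<Rightarrow> ('s \<Rightarrow> int) \<Rightarrow> 's csimp \<Rightarrow> int \<times> int" where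
  "cone_key mn mx (Base s) = (0, mn s)"
| "cone_key mn mx Omega = (1, 0)"
| "cone_key mn mx (Cone s) = (2, - mx s)"

lemma filt_less_iff_cone_key: "filt_less mn mx x y \<longleftrightarrow> cone_key mn mx x < cone_key mn mx y"
  by (cases x; cases y) auto

lemma inj_on_cone_key:
  assumes "inj_on mn K" "inj_on mx K"
  shows "inj_on (cone_key mn mx) (cone_set K)"
proof
  fix x y assume "x \<in> cone_set K" "y \<in> cone_set K" "cone_key mn mx x = cone_key mn mx y"
  then show "x = y" using assms
    by (cases x; cases y) (auto simp: cone_set_def inj_on_def)
qed

lemma cone_filtration_spec:
  assumes "finite K" "inj_on mn K" "inj_on mx K"
  defines "F \<equiv> cone_filtration K mn mx"
  shows "set F = cone_set K" "distinct F" "sorted_wrt (filt_less mn mx) F"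
proof -
  let ?S = "cone_set K" and ?k = "cone_key mn mx"
  let ?spec = "\<lambda>xs. set xs = ?S \<and> distinct xs \<and> sorted_wrt (filt_less mn mx) xs"
  have inj: "inj_on ?k ?S" using inj_on_cone_key assms(2,3) .
  have "filt_less mn mx = (\<lambda>x y. ?k x < ?k y)" by (intro ext) (simp add: filt_less_iff_cone_key)
  then have sorted_iff: "sorted_wrt (filt_less mn mx) xs \<longleftrightarrow> sorted_wrt (<) (map ?k xs)" for xs
    by (simp add: sorted_wrt_map)
  obtain ys where ys: "sorted_wrt (<) ys" "set ys = ?k ` ?S"
    using ex1_sorted_list_for_set_if_finite[of "?k ` ?S"] assms(1)
    by (auto simp: cone_set_def)
  define xs where "xs = map (the_inv_into ?S ?k) ys"
  have keys: "map ?k xs = ys" unfolding xs_def map_map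
    by (rule map_idI) (use ys(2) inj in \<open>auto simp: f_the_inv_into_f\<close>)
  have set_xs: "set xs = ?S" unfolding xs_def using ys(2) inj
    by (auto simp: the_inv_into_f_f image_iff)
  have spec: "?spec xs"
    using set_xs keys ys(1) sorted_iff strict_sorted_iff distinct_map by metis
  have unique: "zs = xs" if "?spec zs" for zs
  proof -
    have "map ?k zs = map ?k xs"
      using strict_sorted_equal[of "map ?k xs" "map ?k zs"] that spec sorted_iff by simp
    then show ?thesis using inj that set_xs by (simp add: inj_on_map_eq_map)
  qed
  have "?spec F"
    unfolding F_def cone_filtration_def by (rule theI[of ?spec, OF spec unique])
  then show "set F = cone_set K" "distinct F" "sorted_wrt (filt_less mn mx) F" by auto
qed

lemma filt_less_ConeD: "filt_less mn mx (Cone a) y \<Longrightarrow> \<exists>b. y = Cone b"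
  by (cases y) auto

lemma bdry_Base_Cone: "bdry dim face (Base s) (Cone x) = 0"
  by (simp add: ind_def)

lemma nonzero_column_low:
  assumes "c \<noteq> (\<lambda>_. 0)" "\<forall>r\<ge>N. c r = 0"
  shows "c (low c) \<noteq> 0" "low c < N" "c r \<noteq> 0 \<Longrightarrow> r \<le> low c"
proof -
  have supp: "{i. c i \<noteq> 0} \<subseteq> {..<N}" using assms(2) by (auto simp: not_less[symmetric])
  then have fin: "finite {i. c i \<noteq> 0}" by (rule finite_subset) simp
  have "low c \<in> {i. c i \<noteq> 0}"
    unfolding low_def using Max_in[OF fin] assms(1) by auto
  then show "c (low c) \<noteq> 0" "low c < N" using supp by auto
  show "c r \<noteq> 0 \<Longrightarrow> r \<le> low c" unfolding low_def using fin by auto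
qed

lemma low_column_reduce_less:
  fixes x y :: "nat \<Rightarrow> 'f::field"
  assumes "x \<noteq> (\<lambda>_. 0)" "y \<noteq> (\<lambda>_. 0)" "\<forall>r\<ge>N. x r = 0" "\<forall>r\<ge>N. y r = 0"
    and "low y = low x" "c = x (low x) / y (low y)"
    and "(\<lambda>r. x r - c * y r) \<noteq> (\<lambda>_. 0)"
  shows "low (\<lambda>r. x r - c * y r) < low x"
proof -
  define z where "z = (\<lambda>r. x r - c * y r)"
  have "\<forall>r\<ge>N. z r = 0" using assms(3,4) by (simp add: z_def)
  note z = nonzero_column_low[OF assms(7)[folded z_def] this]
  note x = nonzero_column_low[OF assms(1,3)]
  note y = nonzero_column_low[OF assms(2,4), unfolded assms(5)]
  have "low z \<le> low x"
    using z(1) x(3) y(3) unfolding z_def by (metis mult_zero_right diff_zero)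
  moreover have "z (low x) = 0" using y(1) assms(6) by (simp add: z_def assms(5))
  ultimately show ?thesis using z(1) unfolding z_def by (metis le_neq_implies_less)
qed

lemma lazy_run_R_eq_DV:
  assumes "lazy_run D N j R V" "\<forall>j r. N \<le> j \<or> N \<le> r \<longrightarrow> D j r = 0"
  shows "R j' r = (\<Sum>k<N. V j' k * D k r)"
  using assms(1)
proof (induction arbitrary: j')
  case init
  show ?case
  proof (cases "j' < N")
    case True
    have "(\<Sum>k<N. id_cols N j' k * D k r) = (\<Sum>k<N. if k = j' then D k r else 0)"
      by (rule sum.cong) (auto simp: id_cols_def)
    then show ?thesis using True by simp
  next
    case False
    then show ?thesis using assms(2) by (simp add: id_cols_def)
  qed
next
  case (reduce j R V i c)
  have "R j r - c * R i r = (\<Sum>k<N. (V j k - c * V i k) * D k r)"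
    by (simp add: reduce.IH sum_subtractf sum_distrib_left left_diff_distrib mult.assoc)
  then show ?case using reduce.IH by simp
qed

lemma lazy_run_V_support:
  assumes "lazy_run D N j R V" "\<forall>j r. N \<le> j \<or> N \<le> r \<longrightarrow> D j r = 0"
    and P_up: "\<And>L' L. L' < L \<Longrightarrow> L < N \<Longrightarrow> P L' \<Longrightarrow> P L"
    and D_Q: "\<And>j. D j \<noteq> (\<lambda>_. 0) \<Longrightarrow> P (low (D j)) \<Longrightarrow> Q j"
  shows "R j' \<noteq> (\<lambda>_. 0) \<Longrightarrow> P (low (R j')) \<Longrightarrow> V j' k \<noteq> 0 \<Longrightarrow> Q k"
  using assms(1)
proof (induction arbitrary: j' k)
  case init
  then show ?case using D_Q by (auto simp: id_cols_def split: if_splits)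
next
  case (reduce j R V i c)
  have supp: "\<forall>r\<ge>N. R j'' r = 0" for j''
    using lazy_run_R_eq_DV[OF reduce.hyps(1) assms(2)] assms(2) by simp
  show ?case
  proof (cases "j' = j")
    case False
    then show ?thesis using reduce.prems reduce.IH by auto
  next
    case True
    have nz: "(\<lambda>r. R j r - c * R i r) \<noteq> (\<lambda>_. 0)" using reduce.prems(1) True by simp
    have "low (\<lambda>r. R j r - c * R i r) < low (R j)"
      using low_column_reduce_less[OF reduce.hyps(3,5) supp supp reduce.hyps(6,7) nz] .
    moreover have "low (R j) < N" using nonzero_column_low(2)[OF reduce.hyps(3) supp] .
    ultimately have "P (low (R j))" using P_up reduce.prems(2) True by auto
    moreover have "V j k \<noteq> 0 \<or> V i k \<noteq> 0" using reduce.prems(3) True by auto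
    ultimately show ?thesis using reduce.IH reduce.hyps(3,5,6) by metis
  qed
qed

lemma cone_pivot_V_avoids_Base:
  fixes R V :: "nat \<Rightarrow> nat \<Rightarrow> 'f::field"
  assumes "sorted_wrt (filt_less mn mx) F"
    and "lazy_run (boundary_matrix dim face F) (length F) j R V"
    and "R a \<noteq> (\<lambda>_. 0)" "F ! low (R a) = Cone \<sigma>" "V a k \<noteq> 0"
  shows "F ! k \<noteq> Base s"
proof -
  let ?D = "boundary_matrix dim face F :: nat \<Rightarrow> nat \<Rightarrow> 'f"
  let ?P = "\<lambda>L. \<exists>x. F ! L = Cone x" and ?Q = "\<lambda>k. \<forall>s. F ! k \<noteq> Base s"
  have Dz: "\<forall>j r. length F \<le> j \<or> length F \<le> r \<longrightarrow> ?D j r = 0"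
    by (simp add: boundary_matrix_def)
  have P_up: "?P L" if "L' < L" "L < length F" "?P L'" for L' L
    using that sorted_wrt_nth_less[OF assms(1)] filt_less_ConeD by metis
  have D_Q: "?Q j" if nz: "?D j \<noteq> (\<lambda>_. 0)" and "?P (low (?D j))" for j
  proof -
    obtain x where x: "F ! low (?D j) = Cone x" using \<open>?P (low (?D j))\<close> by blast
    have "?D j (low (?D j)) \<noteq> 0"
      by (rule nonzero_column_low(1)[OF nz, of "length F"]) (simp add: Dz)
    then have "bdry dim face (F ! j) (Cone x) \<noteq> (0::'f)"
      using x by (simp add: boundary_matrix_def del: bdry.simps split: if_splits)
    then show ?thesis by (metis bdry_Base_Cone)
  qed
  show ?thesis
    using lazy_run_V_support[where P = ?P and Q = ?Q, OF assms(2) Dz] P_up D_Q assms(3-5)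
    by blast
qed

lemma col_chain_nth:
  assumes "distinct F" "m < length F"
  shows "col_chain F c (F ! m) = c m"
proof -
  have "col_chain F c (F ! m) = (\<Sum>k<length F. if k = m then c k else 0)"
    unfolding col_chain_def
    by (rule sum.cong) (use assms in \<open>auto simp: nth_eq_iff_index_eq\<close>)
  then show ?thesis using assms(2) by simp
qed

lemma restrict_col_chain_eq:
  assumes "set F = cone_set K" "distinct F" "\<And>k. k < length F \<Longrightarrow> c k \<noteq> 0 \<Longrightarrow> F ! k \<in> L"
  shows "restrict_chain (col_chain F c) L = col_chain F c"
proof
  fix s
  show "restrict_chain (col_chain F c) L s = col_chain F c s"
  proof (cases "s \<in> set F")
    case True
    then obtain m where "m < length F" "s = F ! m" by (auto simp: in_set_conv_nth)
    then show ?thesis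
      using assms(3)[of m] col_chain_nth[OF assms(2), of m c] by (auto simp: restrict_chain_def)
  next
    case False
    then show ?thesis by (auto simp: restrict_chain_def col_chain_def intro!: sum.neutral)
  qed
qed

lemma bd_col_chain_nth:
  assumes "set F = cone_set K" "distinct F" "m < length F"
  shows "bd K dim face (col_chain F c) (F ! m)
       = (\<Sum>k<length F. c k * boundary_matrix dim face F k m)"
proof -
  have "cone_set K = (\<lambda>k. F ! k) ` {..<length F}" using assms(1) by (auto simp: set_conv_nth)
  moreover have "inj_on (\<lambda>k. F ! k) {..<length F}"
    using assms(2) by (auto simp: inj_on_def nth_eq_iff_index_eq)
  ultimately have "bd K dim face (col_chain F c) (F ! m)
      = (\<Sum>k<length F. col_chain F c (F ! k) * bdry dim face (F ! k) (F ! m))"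
    unfolding bd_def by (simp add: sum.reindex)
  then show ?thesis
    using assms by (simp add: col_chain_nth boundary_matrix_def)
qed

lemma restrict_bd_col_chain:
  assumes "set F = cone_set K" "distinct F" "L \<subseteq> cone_set K"
    and "\<And>r. w r = (\<Sum>k<length F. c k * boundary_matrix dim face F k r)"
  shows "restrict_chain (bd K dim face (col_chain F c)) L = restrict_chain (col_chain F w) L"
proof
  fix t
  show "restrict_chain (bd K dim face (col_chain F c)) L t = restrict_chain (col_chain F w) L t"
  proof (cases "t \<in> L")
    case True
    then have "t \<in> set F" using assms(1,3) by blast
    then obtain m where "m < length F" "t = F ! m" by (auto simp: in_set_conv_nth)
    then show ?thesis
      using True assms by (simp add: restrict_chain_def bd_col_chain_nth col_chain_nth)
  qed (simp add: restrict_chain_def)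
qed

theorem mainTheorem7:
  fixes K :: "'s set" and dim :: "'s \<Rightarrow> nat" and face :: "'s \<Rightarrow> nat \<Rightarrow> 's"
    and mn mx :: "'s \<Rightarrow> int" and R V :: "nat \<Rightarrow> nat \<Rightarrow> 'f::field"
    and \<sigma> \<tau> :: 's and a b :: nat
  assumes "delta_complex K dim face"
    and "\<forall>s\<in>K. mn s < mx s"
    and "\<forall>s t. proper_face K dim face s t \<longrightarrow> mn s < mn t \<and> mn t < mx t \<and> mx t < mx s"
    and "inj_on mn K" and "inj_on mx K"
  defines "F \<equiv> cone_filtration K mn mx"
  assumes "lazy_reduction (boundary_matrix dim face F) (length F) R V"
    and "\<sigma> \<in> K" and "\<tau> \<in> K"
    and "a < length F" and "F ! a = Cone \<tau>"
    and "b < length F" and "F ! b = Cone \<sigma>"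
    and "R a \<noteq> (\<lambda>_. 0)" and "low (R a) = b"
  shows "(\<forall>k<length F. V a k \<noteq> 0 \<longrightarrow> F ! k = Omega \<or> (\<exists>\<rho>\<in>K. F ! k = Cone \<rho>))
       \<and> restrict_chain
           (bd K dim face (restrict_chain (col_chain F (V a)) (cone_set K - Base ` K)))
           (Base ` K)
         = restrict_chain (col_chain F (R a)) (Base ` K)"
proof -
  have "finite K" using assms(1) by (simp add: delta_complex_def)
  note F = cone_filtration_spec[OF this assms(4,5), folded F_def]
  have run: "lazy_run (boundary_matrix dim face F) (length F) (length F) R V"
    using assms(7) by (simp add: lazy_reduction_def)
  have no_base: "F ! k \<notin> Base ` K" if "V a k \<noteq> 0" for k
    using cone_pivot_V_avoids_Base[OF F(3) run assms(14)] that assms(13,15) by blast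
  have V_cone: "F ! k = Omega \<or> (\<exists>\<rho>\<in>K. F ! k = Cone \<rho>)" if "k < length F" "V a k \<noteq> 0" for k
    using no_base[OF that(2)] nth_mem[OF that(1)] F(1) by (cases "F ! k") (auto simp: cone_set_def)
  have "restrict_chain (col_chain F (V a)) (cone_set K - Base ` K) = col_chain F (V a)"
    using F(1) no_base by (intro restrict_col_chain_eq[OF F(1,2)]) auto
  moreover have R_eq_DV: "R a r = (\<Sum>k<length F. V a k * boundary_matrix dim face F k r)" for r
    using lazy_run_R_eq_DV[OF run] by (simp add: boundary_matrix_def)
  have "restrict_chain (bd K dim face (col_chain F (V a))) (Base ` K)
      = restrict_chain (col_chain F (R a)) (Base ` K)"
    by (rule restrict_bd_col_chain[OF F(1,2)]) (auto simp: cone_set_def R_eq_DV)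
  ultimately show ?thesis using V_cone by simp
qed

end
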